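(* Let $m_\alpha>0$ and $m_\beta>0$ be two masses, let $t_1<t_2$, and let $(q_{\alpha 1},p_{\alpha 1})$, $(q_{\beta 1},p_{\beta 1})\in\mathbb{R}^3\times\mathbb{R}^3$ be initial positions and momenta. For $\gamma\in\{\alpha,\beta\}$ let $(q_\gamma(t),p_\gamma(t))$ be the classical trajectory of a particle of mass $m_\gamma$ governed by the Hamiltonian $H_{m_\gamma}$ (described in the context) with $(q_\gamma(t_1),p_\gamma(t_1))=(q_{\gamma 1},p_{\gamma 1})$, and set $(q_{\gamma 2},p_{\gamma 2})=(q_\gamma(t_2),p_\gamma(t_2))$. Then \[ \frac{S_{cl}(t_2,t_1,q_{\alpha 1},p_{\alpha 1})}{m_\alpha}-\frac12\Big(\frac{p_{\alpha 2}}{m_\alpha}+\frac{p_{\beta 2}}{m_\beta}\Big)\cdot q_{\alpha 2}+\frac12\Big(\frac{p_{\alpha 1}}{m_\alpha}+\frac{p_{\beta 1}}{m_\beta}\Big)\cdot q_{\alpha 1} \] \[ =\frac{S_{cl}(t_2,t_1,q_{\beta 1},p_{\beta 1})}{m_\beta}-\frac12\Big(\frac{p_{\alpha 2}}{m_\alpha}+\frac{p_{\beta 2}}{m_\beta}\Big)\cdot q_{\beta 2}+\frac12\Big(\frac{p_{\alpha 1}}{m_\alpha}+\frac{p_{\beta 1}}{m_\beta}\Big)\cdot q_{\beta 1}, \] where the action on the left is computed for mass $m_\alpha$ and the one on the right for mass $m_\beta$. Equivalently, \[ \Big[\tfrac{S_{cl}(t_2,t_1,q_{\alpha 1},p_{\alpha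 1})}{m_\alpha}-\tfrac{p_{\alpha 2}}{m_\alpha}\cdot q_{\alpha 2}+\tfrac{p_{\alpha 1}}{m_\alpha}\cdot q_{\alpha 1}\Big]-\Big[\tfrac{S_{cl}(t_2,t_1,q_{\beta 1},p_{\beta 1})}{m_\beta}-\tfrac{p_{\beta 2}}{m_\beta}\cdot q_{\beta 2}+\tfrac{p_{\beta 1}}{m_\beta}\cdot q_{\beta 1}\Big] =\Big(\tfrac{p_{\beta 2}}{m_\beta}-\tfrac{p_{\alpha 2}}{m_\alpha}\Big)\cdot\tfrac{q_{\alpha 2}+q_{\beta 2}}{2}-\Big(\tfrac{p_{\beta 1}}{m_\beta}-\tfrac{p_{\alpha 1}}{m_\alpha}\Big)\cdot\tfrac{q_{\alpha 1}+q_{\beta 1}}{2}. \]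
   Context: For a particle of mass $m>0$ with position $q\in\mathbb{R}^3$ and momentum $p\in\mathbb{R}^3$, the (time-dependent) external Hamiltonian is \[ H_m(q,p,t)=\frac{1}{2m}\,p\cdot G(t)\,p-\frac{m}{2}\,q\cdot\Gamma(t)\,q-\Omega(t)\cdot(q\times p)-m\,g(t)\cdot q, \] where $G(t)$ is a continuous family of real symmetric invertible $3\times3$ matrices, $\Gamma(t)$ a continuous family of real symmetric $3\times 3$ matrices (gravity gradient), $\Omega(t)\in\mathbb{R}^3$ a continuous rotation vector and $g(t)\in\mathbb{R}^3$ a continuous gravity vector; the functions $G,\Gamma,\Omega,g$ are the same for all masses. The classical trajectory of mass $m$ is the solution of Hamilton's equations $\dot q=\partial_p H_m$, $\dot p=-\partial_q H_m$ with the given initial data. The classical action is $S_{cl}(t_2,t_1,q_1,p_1)=\int_{t_1}^{t_2}\big(p\cdot\dot q-H_m(q,p,t)\big)\,dt$ evaluated along the classical trajectory of mass $m$ starting from $(q_1,p_1)$ at time $t_1$. A dot between vectors denotes the Euclidean inner product. *)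

theory Defs
  imports "HOL-Analysis.Analysis"
begin

definition Ham ::
  "(real \<Rightarrow> real^3^3) \<Rightarrow> (real \<Rightarrow> real^3^3) \<Rightarrow> (real \<Rightarrow> real^3) \<Rightarrow> (real \<Rightarrow> real^3)
   \<Rightarrow> real \<Rightarrow> real^3 \<Rightarrow> real^3 \<Rightarrow> real \<Rightarrow> real" where
  "Ham G Gam Om g m q p t =
     (1 / (2 * m)) * (p \<bullet> (G t *v p)) - (m / 2) * (q \<bullet> (Gam t *v q))
     - Om t \<bullet> cross3 q p - m * (g t \<bullet> q)"

definition hamilton_traj ::
  "(real \<Rightarrow> real^3^3) \<Rightarrow> (real \<Rightarrow> real^3^3) \<Rightarrow> (real \<Rightarrow> real^3) \<Rightarrow> (real \<Rightarrow> real^3)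
   \<Rightarrow> real \<Rightarrow> real \<Rightarrow> real \<Rightarrow> (real \<Rightarrow> real^3) \<Rightarrow> (real \<Rightarrow> real^3) \<Rightarrow> bool" where
  "hamilton_traj G Gam Om g m t1 t2 q p \<longleftrightarrow>
     (\<forall>t\<in>{t1..t2}. \<exists>dq dp.
        (q has_vector_derivative dq) (at t within {t1..t2}) \<and>
        (p has_vector_derivative dp) (at t within {t1..t2}) \<and>
        ((\<lambda>y. Ham G Gam Om g m (q t) y t) has_derivative (\<lambda>v. dq \<bullet> v)) (at (p t)) \<and>
        ((\<lambda>x. Ham G Gam Om g m x (p t) t) has_derivative (\<lambda>v. - (dp \<bullet> v))) (at (q t)))"

definition action ::
  "(real \<Rightarrow> real^3^3) \<Rightarrow> (real \<Rightarrow> real^3^3) \<Rightarrow> (real \<Rightarrow> real^3) \<Rightarrow> (real \<Rightarrow> real^3)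
   \<Rightarrow> real \<Rightarrow> real \<Rightarrow> real \<Rightarrow> (real \<Rightarrow> real^3) \<Rightarrow> (real \<Rightarrow> real^3) \<Rightarrow> real" where
  "action G Gam Om g m t1 t2 q p =
     integral {t1..t2} (\<lambda>t. p t \<bullet> vector_derivative q (at t within {t1..t2})
                             - Ham G Gam Om g m (q t) (p t) t)"

end

theory Submission
  imports Defs
begin

text \<open>
  Apart from the gravity term, \<open>H\<^sub>m\<close> is a quadratic form in \<open>(q, p)\<close>, so Euler's identity for
  homogeneous functions turns the Lagrangian along a trajectory into
  \<open>p \<bullet> q' - H = (q \<bullet> p)'/2 + (m/2) g \<bullet> q\<close>. Hence \<open>S/m\<close> is the boundary term \<open>[q \<bullet> p/m]/2\<close>
  plus half the integral of \<open>g \<bullet> q\<close>. For two masses, the pairing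
  \<open>W = q\<^sub>\<alpha> \<bullet> p\<^sub>\<beta>/m\<^sub>\<beta> - q\<^sub>\<beta> \<bullet> p\<^sub>\<alpha>/m\<^sub>\<alpha>\<close> satisfies \<open>W' = g \<bullet> (q\<^sub>\<alpha> - q\<^sub>\<beta>)\<close>: all mass-independent
  parts of the two flows cancel. Since
  \<open>(p\<^sub>\<alpha>/m\<^sub>\<alpha> + p\<^sub>\<beta>/m\<^sub>\<beta>) \<bullet> (q\<^sub>\<alpha> - q\<^sub>\<beta>) = q\<^sub>\<alpha> \<bullet> p\<^sub>\<alpha>/m\<^sub>\<alpha> - q\<^sub>\<beta> \<bullet> p\<^sub>\<beta>/m\<^sub>\<beta> + W\<close>, the two sides of the
  theorem differ by \<open>[W]/2 - (1/2) \<integral> g \<bullet> (q\<^sub>\<alpha> - q\<^sub>\<beta>)\<close>, which vanishes.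

  Symmetry, invertibility and continuity of the coefficients only matter for the existence of
  trajectories, which the theorem assumes.
\<close>

lemma bounded_linear_cross3:
  "bounded_linear (cross3 q)" "bounded_linear (\<lambda>x. cross3 x p)"
  using bilinear_cross unfolding bilinear_def
  by (auto simp: linear_conv_bounded_linear[symmetric])

lemma Ham_has_derivative_momentum:
  assumes "m \<noteq> 0"
  shows "((\<lambda>y. Ham G Gam Om g m q y t) has_derivative
     (\<lambda>v. (1/(2*m)) * (v \<bullet> (G t *v y) + y \<bullet> (G t *v v)) - Om t \<bullet> cross3 q v)) (at y)"
  unfolding Ham_def using assms
  by (auto intro!: derivative_eq_intros bounded_linear_imp_has_derivative[OF bounded_linear_cross3(1)]
        matrix_vector_mul_bounded_linear[THEN bounded_linear_imp_has_derivative] simp: field_simps)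

lemma Ham_has_derivative_position:
  "((\<lambda>x. Ham G Gam Om g m x p t) has_derivative
     (\<lambda>v. - (m/2) * (v \<bullet> (Gam t *v x) + x \<bullet> (Gam t *v v)) - Om t \<bullet> cross3 v p - m * (g t \<bullet> v)))
   (at x)"
  unfolding Ham_def
  by (auto intro!: derivative_eq_intros bounded_linear_imp_has_derivative[OF bounded_linear_cross3(2)]
        matrix_vector_mul_bounded_linear[THEN bounded_linear_imp_has_derivative] simp: field_simps)

lemma hamilton_traj_equations:
  assumes m: "m \<noteq> 0" and t12: "t1 < t2" and traj: "hamilton_traj G Gam Om g m t1 t2 q p"
    and t: "t \<in> {t1..t2}"
  defines "q' \<equiv> vector_derivative q (at t within {t1..t2})"
    and "p' \<equiv> vector_derivative p (at t within {t1..t2})"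
  shows "(q has_vector_derivative q') (at t within {t1..t2})"
    and "(p has_vector_derivative p') (at t within {t1..t2})"
    and "q' \<bullet> v = (1/(2*m)) * (v \<bullet> (G t *v p t) + p t \<bullet> (G t *v v)) - Om t \<bullet> cross3 (q t) v"
    and "p' \<bullet> v = (m/2) * (v \<bullet> (Gam t *v q t) + q t \<bullet> (Gam t *v v)) + Om t \<bullet> cross3 v (p t)
                    + m * (g t \<bullet> v)"
proof -
  obtain dq dp where dq: "(q has_vector_derivative dq) (at t within {t1..t2})"
    and dp: "(p has_vector_derivative dp) (at t within {t1..t2})"
    and Hp: "((\<lambda>y. Ham G Gam Om g m (q t) y t) has_derivative (\<lambda>v. dq \<bullet> v)) (at (p t))"
    and Hq: "((\<lambda>x. Ham G Gam Om g m x (p t) t) has_derivative (\<lambda>v. - (dp \<bullet> v))) (at (q t))"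
    using traj t unfolding hamilton_traj_def by blast
  have q'_eq: "q' = dq" and p'_eq: "p' = dp"
    unfolding q'_def p'_def using vector_derivative_within_closed_interval[OF t12 t] dq dp by auto
  show "(q has_vector_derivative q') (at t within {t1..t2})"
    and "(p has_vector_derivative p') (at t within {t1..t2})"
    using dq dp q'_eq p'_eq by simp_all
  show "q' \<bullet> v = (1/(2*m)) * (v \<bullet> (G t *v p t) + p t \<bullet> (G t *v v)) - Om t \<bullet> cross3 (q t) v"
    using has_derivative_unique[OF Hp Ham_has_derivative_momentum[OF m]] q'_eq by metis
  have "- (dp \<bullet> v) = - (m/2) * (v \<bullet> (Gam t *v q t) + q t \<bullet> (Gam t *v v))
          - Om t \<bullet> cross3 v (p t) - m * (g t \<bullet> v)"
    using has_derivative_unique[OF Hq Ham_has_derivative_position] by metis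
  then show "p' \<bullet> v = (m/2) * (v \<bullet> (Gam t *v q t) + q t \<bullet> (Gam t *v v)) + Om t \<bullet> cross3 v (p t)
                    + m * (g t \<bullet> v)"
    using p'_eq by simp
qed

lemma hamilton_traj_continuous_on:
  assumes "hamilton_traj G Gam Om g m t1 t2 q p"
  shows "continuous_on {t1..t2} q"
  using assms unfolding hamilton_traj_def continuous_on_eq_continuous_within
  by (metis has_vector_derivative_continuous)

lemma hamilton_traj_gravity_integrable:
  assumes "hamilton_traj G Gam Om g m t1 t2 q p" and "continuous_on UNIV g"
  shows "(\<lambda>t. g t \<bullet> q t) integrable_on {t1..t2}"
  using assms hamilton_traj_continuous_on continuous_on_subset
  by (blast intro: integrable_continuous_interval continuous_on_inner)

lemma hamilton_traj_action_eq:
  assumes m: "m \<noteq> 0" and t12: "t1 < t2" and traj: "hamilton_traj G Gam Om g m t1 t2 q p"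
    and g: "continuous_on UNIV g"
  shows "action G Gam Om g m t1 t2 q p
           = (1/2) * (q t2 \<bullet> p t2 - q t1 \<bullet> p t1) + (m/2) * integral {t1..t2} (\<lambda>t. g t \<bullet> q t)"
proof -
  let ?I = "{t1..t2}"
  define q' where "q' t = vector_derivative q (at t within ?I)" for t
  define p' where "p' t = vector_derivative p (at t within ?I)" for t
  have euler_identity: "(1/2) * (q t \<bullet> p' t + q' t \<bullet> p t) + (m/2) * (g t \<bullet> q t)
      = p t \<bullet> q' t - Ham G Gam Om g m (q t) (p t) t" if t: "t \<in> ?I" for t
    unfolding hamilton_traj_equations(3,4)[OF m t12 traj t, folded q'_def p'_def] Ham_def
      inner_commute[of "p t" "q' t"] inner_commute[of "q t" "p' t"]
    using m by (simp add: field_simps)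
  have "((\<lambda>t. (1/2) * (q t \<bullet> p' t + q' t \<bullet> p t))
         has_integral (1/2) * (q t2 \<bullet> p t2) - (1/2) * (q t1 \<bullet> p t1)) ?I"
  proof (rule fundamental_theorem_of_calculus)
    fix t assume t: "t \<in> ?I"
    show "((\<lambda>t. (1/2) * (q t \<bullet> p t)) has_vector_derivative (1/2) * (q t \<bullet> p' t + q' t \<bullet> p t))
          (at t within ?I)"
      using bounded_bilinear.has_vector_derivative[OF bounded_bilinear_inner
          hamilton_traj_equations(1,2)[OF m t12 traj t]]
      unfolding q'_def p'_def by (auto intro!: derivative_eq_intros)
  qed (use t12 in simp)
  moreover have "((\<lambda>t. (m/2) * (g t \<bullet> q t)) has_integral (m/2) * integral ?I (\<lambda>t. g t \<bullet> q t)) ?I"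
    by (intro has_integral_mult_right integrable_integral
        hamilton_traj_gravity_integrable[OF traj g])
  ultimately have "((\<lambda>t. (1/2) * (q t \<bullet> p' t + q' t \<bullet> p t) + (m/2) * (g t \<bullet> q t)) has_integral
       (1/2) * (q t2 \<bullet> p t2) - (1/2) * (q t1 \<bullet> p t1) + (m/2) * integral ?I (\<lambda>t. g t \<bullet> q t)) ?I"
    by (rule has_integral_add)
  then have "((\<lambda>t. p t \<bullet> q' t - Ham G Gam Om g m (q t) (p t) t) has_integral
       (1/2) * (q t2 \<bullet> p t2) - (1/2) * (q t1 \<bullet> p t1) + (m/2) * integral ?I (\<lambda>t. g t \<bullet> q t)) ?I"
    by (rule has_integral_eq[rotated]) (rule euler_identity)
  then show ?thesis
    unfolding action_def q'_def by (simp add: integral_unique algebra_simps)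
qed

lemma hamilton_traj_pairing_has_vector_derivative:
  assumes ma: "ma \<noteq> 0" and mb: "mb \<noteq> 0" and t12: "t1 < t2"
    and traj_a: "hamilton_traj G Gam Om g ma t1 t2 qa pa"
    and traj_b: "hamilton_traj G Gam Om g mb t1 t2 qb pb"
    and t: "t \<in> {t1..t2}"
  shows "((\<lambda>t. qa t \<bullet> pb t / mb - qb t \<bullet> pa t / ma) has_vector_derivative g t \<bullet> (qa t - qb t))
           (at t within {t1..t2})"
proof -
  let ?I = "{t1..t2}"
  define qa' where "qa' = vector_derivative qa (at t within ?I)"
  define pa' where "pa' = vector_derivative pa (at t within ?I)"
  define qb' where "qb' = vector_derivative qb (at t within ?I)"
  define pb' where "pb' = vector_derivative pb (at t within ?I)"
  note a = hamilton_traj_equations[OF ma t12 traj_a t, folded qa'_def pa'_def]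
  note b = hamilton_traj_equations[OF mb t12 traj_b t, folded qb'_def pb'_def]
  note inner_rule = bounded_bilinear.has_vector_derivative[OF bounded_bilinear_inner]
  have "(qa t \<bullet> pb' + qa' \<bullet> pb t) / mb - (qb t \<bullet> pa' + qb' \<bullet> pa t) / ma
        = (pb' \<bullet> qa t + qa' \<bullet> pb t) / mb - (pa' \<bullet> qb t + qb' \<bullet> pa t) / ma"
    by (simp add: inner_commute)
  also have "\<dots> = g t \<bullet> (qa t - qb t)"
    unfolding a(3,4) b(3,4) using ma mb by (simp add: inner_diff_right field_simps)
  finally have derivative_value:
    "(qa t \<bullet> pb' + qa' \<bullet> pb t) / mb - (qb t \<bullet> pa' + qb' \<bullet> pa t) / ma = g t \<bullet> (qa t - qb t)" .
  have "((\<lambda>t. qa t \<bullet> pb t / mb - qb t \<bullet> pa t / ma) has_vector_derivative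
         (qa t \<bullet> pb' + qa' \<bullet> pb t) / mb - (qb t \<bullet> pa' + qb' \<bullet> pa t) / ma) (at t within ?I)"
    by (intro derivative_intros inner_rule a(1,2) b(1,2))
  then show ?thesis
    unfolding derivative_value .
qed

lemma hamilton_traj_gravity_integral_diff:
  assumes ma: "ma \<noteq> 0" and mb: "mb \<noteq> 0" and t12: "t1 < t2"
    and traj_a: "hamilton_traj G Gam Om g ma t1 t2 qa pa"
    and traj_b: "hamilton_traj G Gam Om g mb t1 t2 qb pb"
    and g: "continuous_on UNIV g"
  shows "integral {t1..t2} (\<lambda>t. g t \<bullet> qa t) - integral {t1..t2} (\<lambda>t. g t \<bullet> qb t)
           = (qa t2 \<bullet> pb t2 / mb - qb t2 \<bullet> pa t2 / ma) - (qa t1 \<bullet> pb t1 / mb - qb t1 \<bullet> pa t1 / ma)"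
proof -
  have "((\<lambda>t. g t \<bullet> (qa t - qb t)) has_integral
         (qa t2 \<bullet> pb t2 / mb - qb t2 \<bullet> pa t2 / ma) - (qa t1 \<bullet> pb t1 / mb - qb t1 \<bullet> pa t1 / ma))
        {t1..t2}"
    using t12 hamilton_traj_pairing_has_vector_derivative[OF ma mb t12 traj_a traj_b]
    by (intro fundamental_theorem_of_calculus) auto
  moreover have "((\<lambda>t. g t \<bullet> (qa t - qb t)) has_integral
         integral {t1..t2} (\<lambda>t. g t \<bullet> qa t) - integral {t1..t2} (\<lambda>t. g t \<bullet> qb t)) {t1..t2}"
    unfolding inner_diff_right
    by (intro has_integral_diff integrable_integral
        hamilton_traj_gravity_integrable[OF traj_a g]
        hamilton_traj_gravity_integrable[OF traj_b g])
  ultimately show ?thesis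
    using has_integral_unique by blast
qed

theorem theorem1:
  fixes G Gam :: "real \<Rightarrow> real^3^3" and Om g :: "real \<Rightarrow> real^3"
    and ma mb t1 t2 :: real
    and qa pa qb pb :: "real \<Rightarrow> real^3"
    and qa1 pa1 qb1 pb1 :: "real^3"
  assumes G_cont: "continuous_on UNIV G"
    and G_sym: "\<And>t. transpose (G t) = G t"
    and G_inv: "\<And>t. invertible (G t)"
    and Gam_cont: "continuous_on UNIV Gam"
    and Gam_sym: "\<And>t. transpose (Gam t) = Gam t"
    and Om_cont: "continuous_on UNIV Om"
    and g_cont: "continuous_on UNIV g"
    and ma_pos: "ma > 0" and mb_pos: "mb > 0"
    and t12: "t1 < t2"
    and traj_a: "hamilton_traj G Gam Om g ma t1 t2 qa pa"
    and init_a: "qa t1 = qa1" "pa t1 = pa1"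
    and traj_b: "hamilton_traj G Gam Om g mb t1 t2 qb pb"
    and init_b: "qb t1 = qb1" "pb t1 = pb1"
  shows "action G Gam Om g ma t1 t2 qa pa / ma
           - (1/2) * (((1/ma) *\<^sub>R pa t2 + (1/mb) *\<^sub>R pb t2) \<bullet> qa t2)
           + (1/2) * (((1/ma) *\<^sub>R pa1 + (1/mb) *\<^sub>R pb1) \<bullet> qa1)
       = action G Gam Om g mb t1 t2 qb pb / mb
           - (1/2) * (((1/ma) *\<^sub>R pa t2 + (1/mb) *\<^sub>R pb t2) \<bullet> qb t2)
           + (1/2) * (((1/ma) *\<^sub>R pa1 + (1/mb) *\<^sub>R pb1) \<bullet> qb1)"
proof -
  have ma: "ma \<noteq> 0" and mb: "mb \<noteq> 0" using ma_pos mb_pos by auto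
  have gravity: "integral {t1..t2} (\<lambda>t. g t \<bullet> qa t) = integral {t1..t2} (\<lambda>t. g t \<bullet> qb t)
      + (qa t2 \<bullet> pb t2 / mb - qb t2 \<bullet> pa t2 / ma) - (qa t1 \<bullet> pb t1 / mb - qb t1 \<bullet> pa t1 / ma)"
    using hamilton_traj_gravity_integral_diff[OF ma mb t12 traj_a traj_b g_cont] by simp
  show ?thesis
    unfolding hamilton_traj_action_eq[OF ma t12 traj_a g_cont]
      hamilton_traj_action_eq[OF mb t12 traj_b g_cont] init_a[symmetric] init_b[symmetric] gravity
    using ma mb
    by (simp add: inner_add_left inner_commute[of "pa _"] inner_commute[of "pb _"] field_simps)
qed

end
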